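(* Let $G$ be a connected graph on $n\ge 12$ vertices with $\gamma(G)\neq 2$. Then the parameters $dv(G,k_1,k_2,k_3)$ for all nonnegative integers $k_1,k_2,k_3$ with $0\le k_1+k_2+k_3\le n-3$, and $dv(G,k_1,k,k)$ for all nonnegative integers $k_1,k$ with $0\le k_1+2k\le n-3$, are reconstructible; that is, for every graph $H$ with $\mathscr{D}(H)=\mathscr{D}(G)$ these parameters take the same values on $H$ as on $G$.
   Context: All graphs are finite, simple and undirected; $\gamma(G)$ is the domination number. For a vertex $v$, the card $G-v$ is the unlabeled graph obtained by deleting $v$; the deck $\mathscr{D}(G)$ is the multiset of all cards. For nonnegative integers $k_1,k_2,k_3$, $dv(G,k_1,k_2,k_3)$ denotes the number of pairs of non-adjacent vertices $x$ and $y$ in $G$ such that exactly $k_1$ vertices are adjacent to both $x$ and $y$, exactly $k_2$ vertices are adjacent to $x$ but not to $y$, and exactly $k_3$ vertices are adjacent to $y$ but not to $x$. *)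

theory Defs
  imports Main
begin

definition graph :: "'a set \<Rightarrow> ('a \<Rightarrow> 'a \<Rightarrow> bool) \<Rightarrow> bool" where
  "graph V E \<longleftrightarrow> finite V \<and> (\<forall>x y. E x y \<longrightarrow> x \<in> V \<and> y \<in> V)
     \<and> (\<forall>x y. E x y \<longrightarrow> E y x) \<and> (\<forall>x. \<not> E x x)"

definition connected_graph :: "'a set \<Rightarrow> ('a \<Rightarrow> 'a \<Rightarrow> bool) \<Rightarrow> bool" where
  "connected_graph V E \<longleftrightarrow> V \<noteq> {} \<and> (\<forall>x\<in>V. \<forall>y\<in>V. E\<^sup>*\<^sup>* x y)"

definition dominating :: "'a set \<Rightarrow> ('a \<Rightarrow> 'a \<Rightarrow> bool) \<Rightarrow> 'a set \<Rightarrow> bool" where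
  "dominating V E S \<longleftrightarrow> S \<subseteq> V \<and> (\<forall>v\<in>V. v \<in> S \<or> (\<exists>s\<in>S. E v s))"

definition domination_number :: "'a set \<Rightarrow> ('a \<Rightarrow> 'a \<Rightarrow> bool) \<Rightarrow> nat" where
  "domination_number V E = Min {card S | S. dominating V E S}"

definition graph_iso :: "'a set \<Rightarrow> ('a \<Rightarrow> 'a \<Rightarrow> bool) \<Rightarrow> 'b set \<Rightarrow> ('b \<Rightarrow> 'b \<Rightarrow> bool) \<Rightarrow> bool" where
  "graph_iso V1 E1 V2 E2 \<longleftrightarrow> (\<exists>f. bij_betw f V1 V2 \<and>
      (\<forall>x\<in>V1. \<forall>y\<in>V1. E1 x y \<longleftrightarrow> E2 (f x) (f y)))"

definition card_verts :: "'a set \<Rightarrow> 'a \<Rightarrow> 'a set" where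
  "card_verts V v = V - {v}"

definition card_edges :: "('a \<Rightarrow> 'a \<Rightarrow> bool) \<Rightarrow> 'a \<Rightarrow> ('a \<Rightarrow> 'a \<Rightarrow> bool)" where
  "card_edges E v = (\<lambda>x y. E x y \<and> x \<noteq> v \<and> y \<noteq> v)"

text \<open>Equality of decks as multisets of unlabeled cards: there is a bijection
between the vertex sets matching each card with an isomorphic card.\<close>
definition same_deck :: "'a set \<Rightarrow> ('a \<Rightarrow> 'a \<Rightarrow> bool) \<Rightarrow> 'b set \<Rightarrow> ('b \<Rightarrow> 'b \<Rightarrow> bool) \<Rightarrow> bool" where
  "same_deck V1 E1 V2 E2 \<longleftrightarrow> (\<exists>g. bij_betw g V1 V2 \<and>
      (\<forall>v\<in>V1. graph_iso (card_verts V1 v) (card_edges E1 v)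
                          (card_verts V2 (g v)) (card_edges E2 (g v))))"

definition dv :: "'a set \<Rightarrow> ('a \<Rightarrow> 'a \<Rightarrow> bool) \<Rightarrow> nat \<Rightarrow> nat \<Rightarrow> nat \<Rightarrow> nat" where
  "dv V E k1 k2 k3 = card {{x, y} | x y. x \<in> V \<and> y \<in> V \<and> x \<noteq> y \<and> \<not> E x y
      \<and> card {z\<in>V. E z x \<and> E z y} = k1
      \<and> card {z\<in>V. E z x \<and> \<not> E z y} = k2
      \<and> card {z\<in>V. E z y \<and> \<not> E z x} = k3}"

end

theory Submission
  imports Defs
begin

(*
  Call an ordered pair (x, y) of distinct non-adjacent vertices a pair of type (k1, k2, k3) if x and y
  have k1 common neighbours, k2 neighbours of x are not adjacent to y and k3 neighbours of y are not
  adjacent to x; let T(k) be the number of such pairs.  Deleting a vertex outside {x, y} lowers exactly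
  one coordinate of the type by one, unless the vertex is adjacent to neither x nor y.  Double counting
  over the deck therefore gives the Kelly-type identities

    sum_v T_(G-v)(k) = (n - 2 - |k|) T(k) + (k1 + 1) T(k + e1) + (k2 + 1) T(k + e2) + (k3 + 1) T(k + e3),

  which determine every T(k) from the deck by downward induction on |k|, once the top level
  |k| = n - 2, the non-adjacent pairs dominating the graph, is known.

  If G has a universal vertex u, its degree n - 1 is seen in the deck by counting edges, so a
  hypomorphism g maps u to a universal vertex and the isomorphism between the cards G - u and H - g(u)
  extends to an isomorphism between G and H.  Otherwise, as the domination number is not 2, no pair
  dominates G.  The same downward induction applied to the number of vertices dominated by neither x
  nor y, started at n - 2 where the count vanishes because neither graph has isolated vertices,
  carries this over to H.  Finally, dv counts unordered pairs, each of which arises from two ordered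
  ones.
*)

definition nonadj_pairs :: "'a set \<Rightarrow> ('a \<Rightarrow> 'a \<Rightarrow> bool) \<Rightarrow> ('a \<times> 'a) set" where
  "nonadj_pairs V E = {(x, y). x \<in> V \<and> y \<in> V \<and> x \<noteq> y \<and> \<not> E x y}"

definition common_nbrs :: "'a set \<Rightarrow> ('a \<Rightarrow> 'a \<Rightarrow> bool) \<Rightarrow> 'a \<Rightarrow> 'a \<Rightarrow> 'a set" where
  "common_nbrs V E x y = {z \<in> V. E z x \<and> E z y}"

definition private_nbrs :: "'a set \<Rightarrow> ('a \<Rightarrow> 'a \<Rightarrow> bool) \<Rightarrow> 'a \<Rightarrow> 'a \<Rightarrow> 'a set" where
  "private_nbrs V E x y = {z \<in> V. E z x \<and> \<not> E z y}"

fun undominated :: "'a set \<Rightarrow> ('a \<Rightarrow> 'a \<Rightarrow> bool) \<Rightarrow> 'a \<times> 'a \<Rightarrow> 'a set" where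
  "undominated V E (x, y) = {z \<in> V. z \<noteq> x \<and> z \<noteq> y \<and> \<not> E z x \<and> \<not> E z y}"

fun pair_type :: "'a set \<Rightarrow> ('a \<Rightarrow> 'a \<Rightarrow> bool) \<Rightarrow> 'a \<times> 'a \<Rightarrow> nat \<times> nat \<times> nat" where
  "pair_type V E (x, y) =
     (card (common_nbrs V E x y), card (private_nbrs V E x y), card (private_nbrs V E y x))"

definition pairs_of_type :: "'a set \<Rightarrow> ('a \<Rightarrow> 'a \<Rightarrow> bool) \<Rightarrow> nat \<times> nat \<times> nat \<Rightarrow> ('a \<times> 'a) set" where
  "pairs_of_type V E k = {p \<in> nonadj_pairs V E. pair_type V E p = k}"

definition pairs_with_undominated :: "'a set \<Rightarrow> ('a \<Rightarrow> 'a \<Rightarrow> bool) \<Rightarrow> nat \<Rightarrow> ('a \<times> 'a) set" where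
  "pairs_with_undominated V E d = {p \<in> nonadj_pairs V E. card (undominated V E p) = d}"

definition arcs :: "'a set \<Rightarrow> ('a \<Rightarrow> 'a \<Rightarrow> bool) \<Rightarrow> ('a \<times> 'a) set" where
  "arcs V E = {(x, y). x \<in> V \<and> y \<in> V \<and> E x y}"

definition degree :: "'a set \<Rightarrow> ('a \<Rightarrow> 'a \<Rightarrow> bool) \<Rightarrow> 'a \<Rightarrow> nat" where
  "degree V E x = card {y \<in> V. E x y}"

definition hypomorphism ::
    "'a set \<Rightarrow> ('a \<Rightarrow> 'a \<Rightarrow> bool) \<Rightarrow> 'b set \<Rightarrow> ('b \<Rightarrow> 'b \<Rightarrow> bool) \<Rightarrow> ('a \<Rightarrow> 'b) \<Rightarrow> bool" where
  "hypomorphism V E W F g \<longleftrightarrow> bij_betw g V W \<and>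
     (\<forall>v\<in>V. graph_iso (V - {v}) (card_edges E v) (W - {g v}) (card_edges F (g v)))"

lemma same_deck_iff_hypomorphism: "same_deck V E W F \<longleftrightarrow> (\<exists>g. hypomorphism V E W F g)"
  by (simp add: same_deck_def hypomorphism_def card_verts_def)

lemma graphD:
  assumes "graph V E"
  shows "finite V" and "E x y \<Longrightarrow> x \<in> V" and "E x y \<Longrightarrow> y \<in> V"
    and "E x y \<Longrightarrow> E y x" and "\<not> E x x"
  using assms by (auto simp: graph_def)

lemma nonadj_pairs_subset: "nonadj_pairs V E \<subseteq> V \<times> V"
  by (auto simp: nonadj_pairs_def)

lemma finite_nonadj_pairs: "finite V \<Longrightarrow> finite (nonadj_pairs V E)"
  using nonadj_pairs_subset by (rule finite_subset) simp

lemma finite_arcs: "finite V \<Longrightarrow> finite (arcs V E)"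
  by (rule finite_subset[of _ "V \<times> V"]) (auto simp: arcs_def)

lemma finite_pairs_with_undominated: "finite V \<Longrightarrow> finite (pairs_with_undominated V E d)"
  by (simp add: pairs_with_undominated_def finite_nonadj_pairs)

lemma nonadj_pairs_delete:
  "nonadj_pairs (V - {v}) (card_edges E v) = {(x, y) \<in> nonadj_pairs V E. x \<noteq> v \<and> y \<noteq> v}"
  by (auto simp: nonadj_pairs_def card_edges_def)

lemma nbr_sets_delete:
  assumes "x \<noteq> v" and "y \<noteq> v"
  shows "common_nbrs (V - {v}) (card_edges E v) x y = common_nbrs V E x y - {v}"
    and "private_nbrs (V - {v}) (card_edges E v) x y = private_nbrs V E x y - {v}"
    and "undominated (V - {v}) (card_edges E v) (x, y) = undominated V E (x, y) - {v}"
  using assms by (auto simp: common_nbrs_def private_nbrs_def card_edges_def)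

lemma pairs_of_type_delete_iff:
  "(x, y) \<in> pairs_of_type (V - {v}) (card_edges E v) k \<longleftrightarrow>
     (x, y) \<in> nonadj_pairs V E \<and> v \<noteq> x \<and> v \<noteq> y \<and>
     (card (common_nbrs V E x y - {v}), card (private_nbrs V E x y - {v}),
      card (private_nbrs V E y x - {v})) = k"
  by (cases "v = x \<or> v = y") (auto simp: pairs_of_type_def nonadj_pairs_delete nbr_sets_delete)

lemma pairs_with_undominated_delete_iff:
  "(x, y) \<in> pairs_with_undominated (V - {v}) (card_edges E v) d \<longleftrightarrow>
     (x, y) \<in> nonadj_pairs V E \<and> v \<noteq> x \<and> v \<noteq> y \<and> card (undominated V E (x, y) - {v}) = d"
  by (cases "v = x \<or> v = y")
    (auto simp: pairs_with_undominated_def nonadj_pairs_delete nbr_sets_delete(3) simp del: undominated.simps)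

lemma nonadj_pair_partition:
  assumes "graph V E" and "(x, y) \<in> nonadj_pairs V E"
  shows "V - {x, y} = common_nbrs V E x y \<union> private_nbrs V E x y \<union> private_nbrs V E y x
                        \<union> undominated V E (x, y)"
    and "common_nbrs V E x y \<inter> private_nbrs V E x y = {}"
    and "common_nbrs V E x y \<inter> private_nbrs V E y x = {}"
    and "private_nbrs V E x y \<inter> private_nbrs V E y x = {}"
    and "(common_nbrs V E x y \<union> private_nbrs V E x y \<union> private_nbrs V E y x)
           \<inter> undominated V E (x, y) = {}"
  using assms by (auto simp: graph_def nonadj_pairs_def common_nbrs_def private_nbrs_def)

lemma card_Diff_nonadj_pair:
  assumes "graph V E" and "(x, y) \<in> nonadj_pairs V E"
  shows "card (V - {x, y}) = card V - 2"
  using assms by (auto simp: nonadj_pairs_def graphD(1) card_Diff_subset)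

lemma card_nonadj_pair_partition:
  assumes "graph V E" and "(x, y) \<in> nonadj_pairs V E"
  shows "card (common_nbrs V E x y) + card (private_nbrs V E x y) + card (private_nbrs V E y x)
           + card (undominated V E (x, y)) = card V - 2"
proof -
  note part = nonadj_pair_partition[OF assms]
  have "finite (V - {x, y})"
    using graphD(1)[OF assms(1)] by simp
  then have "card (V - {x, y}) = card (common_nbrs V E x y) + card (private_nbrs V E x y)
               + card (private_nbrs V E y x) + card (undominated V E (x, y))"
    unfolding part(1) using part(2-5) by (simp add: card_Un_disjoint Int_Un_distrib2)
  with card_Diff_nonadj_pair[OF assms] show ?thesis by simp
qed

section \<open>Kelly-type identities\<close>

lemma card_deletions_pair_of_type:
  assumes G: "graph V E" and p: "p \<in> nonadj_pairs V E"
  shows "card {v \<in> V. p \<in> pairs_of_type (V - {v}) (card_edges E v) (k1, k2, k3)} =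
      (if pair_type V E p = (k1, k2, k3) then card V - 2 - (k1 + k2 + k3) else 0)
    + (if pair_type V E p = (Suc k1, k2, k3) then Suc k1 else 0)
    + (if pair_type V E p = (k1, Suc k2, k3) then Suc k2 else 0)
    + (if pair_type V E p = (k1, k2, Suc k3) then Suc k3 else 0)"
    (is "_ = ?count")
proof -
  obtain x y where xy: "p = (x, y)" "(x, y) \<in> nonadj_pairs V E"
    using p by (cases p) auto
  define A B C D where "A = common_nbrs V E x y" and "B = private_nbrs V E x y"
    and "C = private_nbrs V E y x" and "D = undominated V E (x, y)"
  note part = nonadj_pair_partition[OF G xy(2), folded A_def B_def C_def D_def]
  have fin: "finite A" "finite B" "finite C" "finite D"
    using graphD(1)[OF G] by (auto simp: A_def B_def C_def D_def common_nbrs_def private_nbrs_def)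
  have "{v \<in> V. p \<in> pairs_of_type (V - {v}) (card_edges E v) (k1, k2, k3)} =
      {v \<in> A. (card A - 1, card B, card C) = (k1, k2, k3)}
    \<union> {v \<in> B. (card A, card B - 1, card C) = (k1, k2, k3)}
    \<union> {v \<in> C. (card A, card B, card C - 1) = (k1, k2, k3)}
    \<union> {v \<in> D. (card A, card B, card C) = (k1, k2, k3)}"
    unfolding xy(1) pairs_of_type_delete_iff A_def[symmetric] B_def[symmetric] C_def[symmetric]
    using xy(2) part fin by (auto simp: card_Diff_singleton_if)
  also have "card \<dots> =
      (if (card A - 1, card B, card C) = (k1, k2, k3) then card A else 0)
    + (if (card A, card B - 1, card C) = (k1, k2, k3) then card B else 0)
    + (if (card A, card B, card C - 1) = (k1, k2, k3) then card C else 0)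
    + (if (card A, card B, card C) = (k1, k2, k3) then card D else 0)"
    using part(2-5) fin by (simp add: card_Un_disjoint Int_Un_distrib2)
  also have "\<dots> = ?count"
    using card_nonadj_pair_partition[OF G xy(2), folded A_def B_def C_def D_def]
    by (cases "card A"; cases "card B"; cases "card C") (auto simp: xy(1) A_def B_def C_def)
  finally show ?thesis .
qed

lemma card_deletions_pair_with_undominated:
  assumes G: "graph V E" and p: "p \<in> nonadj_pairs V E"
  shows "card {v \<in> V. p \<in> pairs_with_undominated (V - {v}) (card_edges E v) d} =
      (if card (undominated V E p) = d then card V - 2 - d else 0)
    + (if card (undominated V E p) = Suc d then Suc d else 0)"
proof -
  obtain x y where xy: "p = (x, y)" "(x, y) \<in> nonadj_pairs V E"
    using p by (cases p) auto
  define D R where "D = undominated V E (x, y)" and "R = V - {x, y} - D"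
  have fin: "finite D" "finite R"
    using graphD(1)[OF G] by (auto simp: D_def R_def)
  have DR: "D \<subseteq> V - {x, y}" "R \<inter> D = {}"
    by (auto simp: D_def R_def)
  then have "{v \<in> V. p \<in> pairs_with_undominated (V - {v}) (card_edges E v) d} =
      {v \<in> R. card D = d} \<union> {v \<in> D. card D - 1 = d}"
    unfolding xy(1) pairs_with_undominated_delete_iff D_def[symmetric]
    using xy(2) fin by (auto simp: R_def card_Diff_singleton_if)
  also have "card \<dots> = (if card D = d then card R else 0) + (if card D - 1 = d then card D else 0)"
    by (subst card_Un_disjoint) (use fin DR in auto)
  also have "card R = card V - 2 - card D"
    using DR(1) fin card_Diff_nonadj_pair[OF G xy(2)] by (simp add: R_def card_Diff_subset)
  finally show ?thesis
    by (cases "card D") (auto simp: xy(1) D_def)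
qed

lemma sum_card_eq_sum_card_members:
  assumes "finite V" and "finite P" and "\<And>v. v \<in> V \<Longrightarrow> S v \<subseteq> P"
  shows "(\<Sum>v\<in>V. card (S v)) = (\<Sum>p\<in>P. card {v \<in> V. p \<in> S v})"
proof -
  have "(\<Sum>v\<in>V. card (S v)) = (\<Sum>v\<in>V. card {p \<in> P. p \<in> S v})"
    using assms(3) by (intro sum.cong refl arg_cong[where f = card]) auto
  also have "\<dots> = (\<Sum>p\<in>P. card {v \<in> V. p \<in> S v})"
    using assms(1,2) by (rule sum_multicount_gen) simp
  finally show ?thesis .
qed

lemma sum_if_eq_card:
  "finite A \<Longrightarrow> (\<Sum>p\<in>A. if f p = k then c else 0) = c * card {p \<in> A. f p = k}"
  by (simp add: sum.inter_filter[symmetric])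

lemma sum_card_pairs_of_type_delete:
  assumes G: "graph V E"
  shows "(\<Sum>v\<in>V. card (pairs_of_type (V - {v}) (card_edges E v) (k1, k2, k3))) =
      (card V - 2 - (k1 + k2 + k3)) * card (pairs_of_type V E (k1, k2, k3))
    + Suc k1 * card (pairs_of_type V E (Suc k1, k2, k3))
    + Suc k2 * card (pairs_of_type V E (k1, Suc k2, k3))
    + Suc k3 * card (pairs_of_type V E (k1, k2, Suc k3))"
    (is "_ = ?rhs")
proof -
  have fin: "finite V" "finite (nonadj_pairs V E)"
    using graphD(1)[OF G] by (auto intro: finite_nonadj_pairs)
  have "(\<Sum>v\<in>V. card (pairs_of_type (V - {v}) (card_edges E v) (k1, k2, k3))) =
      (\<Sum>p\<in>nonadj_pairs V E. card {v \<in> V. p \<in> pairs_of_type (V - {v}) (card_edges E v) (k1, k2, k3)})"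
    by (rule sum_card_eq_sum_card_members)
      (use fin in \<open>auto simp: pairs_of_type_def nonadj_pairs_delete\<close>)
  also have "\<dots> =
     (\<Sum>p\<in>nonadj_pairs V E.
        (if pair_type V E p = (k1, k2, k3) then card V - 2 - (k1 + k2 + k3) else 0)
      + (if pair_type V E p = (Suc k1, k2, k3) then Suc k1 else 0)
      + (if pair_type V E p = (k1, Suc k2, k3) then Suc k2 else 0)
      + (if pair_type V E p = (k1, k2, Suc k3) then Suc k3 else 0))"
    by (rule sum.cong) (simp_all add: card_deletions_pair_of_type[OF G])
  also have "\<dots> = ?rhs"
    using fin(2) by (simp only: sum.distrib sum_if_eq_card pairs_of_type_def)
  finally show ?thesis .
qed

lemma sum_card_pairs_with_undominated_delete:
  assumes G: "graph V E"
  shows "(\<Sum>v\<in>V. card (pairs_with_undominated (V - {v}) (card_edges E v) d)) =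
      (card V - 2 - d) * card (pairs_with_undominated V E d)
    + Suc d * card (pairs_with_undominated V E (Suc d))"
    (is "_ = ?rhs")
proof -
  have fin: "finite V" "finite (nonadj_pairs V E)"
    using graphD(1)[OF G] by (auto intro: finite_nonadj_pairs)
  have "(\<Sum>v\<in>V. card (pairs_with_undominated (V - {v}) (card_edges E v) d)) =
      (\<Sum>p\<in>nonadj_pairs V E. card {v \<in> V. p \<in> pairs_with_undominated (V - {v}) (card_edges E v) d})"
    by (rule sum_card_eq_sum_card_members)
      (use fin in \<open>auto simp: pairs_with_undominated_def nonadj_pairs_delete\<close>)
  also have "\<dots> =
     (\<Sum>p\<in>nonadj_pairs V E.
        (if card (undominated V E p) = d then card V - 2 - d else 0)
      + (if card (undominated V E p) = Suc d then Suc d else 0))"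
    by (rule sum.cong) (simp_all add: card_deletions_pair_with_undominated[OF G])
  also have "\<dots> = ?rhs"
    using fin(2) by (simp only: sum.distrib sum_if_eq_card pairs_with_undominated_def)
  finally show ?thesis .
qed

lemma sum_card_arcs_delete:
  assumes G: "graph V E"
  shows "(\<Sum>v\<in>V. card (arcs (V - {v}) (card_edges E v))) = (card V - 2) * card (arcs V E)"
proof -
  have fin: "finite V" "finite (arcs V E)"
    using graphD(1)[OF G] by (auto intro: finite_arcs)
  have "(\<Sum>v\<in>V. card (arcs (V - {v}) (card_edges E v))) =
      (\<Sum>p\<in>arcs V E. card {v \<in> V. p \<in> arcs (V - {v}) (card_edges E v)})"
    by (rule sum_card_eq_sum_card_members) (use fin in \<open>auto simp: arcs_def card_edges_def\<close>)
  also have "\<dots> = (\<Sum>p\<in>arcs V E. card V - 2)"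
  proof (rule sum.cong)
    fix p assume "p \<in> arcs V E"
    then obtain x y where p: "p = (x, y)" "x \<in> V" "y \<in> V" "E x y"
      by (auto simp: arcs_def)
    then have "{v \<in> V. p \<in> arcs (V - {v}) (card_edges E v)} = V - {x, y}"
      by (auto simp: arcs_def card_edges_def)
    moreover have "x \<noteq> y"
      using p(4) graphD(5)[OF G] by auto
    ultimately show "card {v \<in> V. p \<in> arcs (V - {v}) (card_edges E v)} = card V - 2"
      using p fin(1) by (simp add: card_Diff_subset)
  qed simp
  finally show ?thesis
    by simp
qed

lemma card_arcs_delete:
  assumes G: "graph V E" and v: "v \<in> V"
  shows "card (arcs V E) = card (arcs (V - {v}) (card_edges E v)) + 2 * degree V E v"
proof -
  define N where "N = {y \<in> V. E v y}"
  have fin: "finite N" "finite (arcs (V - {v}) (card_edges E v))"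
    using graphD(1)[OF G] by (auto simp: N_def intro: finite_arcs)
  have "arcs V E = arcs (V - {v}) (card_edges E v) \<union> (Pair v ` N \<union> (\<lambda>y. (y, v)) ` N)"
    using v graphD[OF G] by (auto simp: arcs_def card_edges_def N_def)
  moreover have "arcs (V - {v}) (card_edges E v) \<inter> (Pair v ` N \<union> (\<lambda>y. (y, v)) ` N) = {}"
    by (auto simp: arcs_def card_edges_def)
  ultimately have "card (arcs V E) =
      card (arcs (V - {v}) (card_edges E v)) + card (Pair v ` N \<union> (\<lambda>y. (y, v)) ` N)"
    using fin by (simp add: card_Un_disjoint)
  also have "card (Pair v ` N \<union> (\<lambda>y. (y, v)) ` N) = card N + card N"
    using fin graphD(5)[OF G]
    by (subst card_Un_disjoint) (auto simp: N_def card_image inj_on_def)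
  finally show ?thesis
    by (simp add: degree_def N_def)
qed

section \<open>Isomorphism invariance and the deck\<close>

lemma card_pairs_bij_betw:
  assumes f: "bij_betw f V1 V2" and "S1 \<subseteq> V1 \<times> V1" and "S2 \<subseteq> V2 \<times> V2"
    and "\<And>x y. x \<in> V1 \<Longrightarrow> y \<in> V1 \<Longrightarrow> (f x, f y) \<in> S2 \<longleftrightarrow> (x, y) \<in> S1"
  shows "card S1 = card S2"
proof -
  have "map_prod f f ` S1 = S2"
  proof
    show "map_prod f f ` S1 \<subseteq> S2"
      using assms(2,4) by auto
    show "S2 \<subseteq> map_prod f f ` S1"
    proof
      fix q assume "q \<in> S2"
      moreover obtain x y where "x \<in> V1" "y \<in> V1" "q = (f x, f y)"
        using \<open>q \<in> S2\<close> assms(3) f by (auto simp: bij_betw_def)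
      ultimately show "q \<in> map_prod f f ` S1"
        using assms(4) by force
    qed
  qed
  then have "bij_betw (map_prod f f) S1 S2"
    using bij_betw_subset[OF bij_betw_map_prod[OF f f] assms(2)] by blast
  then show ?thesis
    by (rule bij_betw_same_card)
qed

lemma nbr_sets_graph_iso:
  assumes f: "bij_betw f V1 V2" and e: "\<forall>x\<in>V1. \<forall>y\<in>V1. E1 x y \<longleftrightarrow> E2 (f x) (f y)"
    and x: "x \<in> V1" and y: "y \<in> V1"
  shows "common_nbrs V2 E2 (f x) (f y) = f ` common_nbrs V1 E1 x y"
    and "private_nbrs V2 E2 (f x) (f y) = f ` private_nbrs V1 E1 x y"
    and "undominated V2 E2 (f x, f y) = f ` undominated V1 E1 (x, y)"
proof -
  have V2: "V2 = f ` V1" and inj: "inj_on f V1"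
    using f by (auto simp: bij_betw_def)
  show "common_nbrs V2 E2 (f x) (f y) = f ` common_nbrs V1 E1 x y"
    unfolding common_nbrs_def V2 using e x y by auto
  show "private_nbrs V2 E2 (f x) (f y) = f ` private_nbrs V1 E1 x y"
    unfolding private_nbrs_def V2 using e x y by auto
  show "undominated V2 E2 (f x, f y) = f ` undominated V1 E1 (x, y)"
    unfolding undominated.simps V2 using e x y inj_on_eq_iff[OF inj] by auto
qed

lemma graph_iso_card_pairs:
  assumes "graph_iso V1 E1 V2 E2"
  shows "card (pairs_of_type V1 E1 k) = card (pairs_of_type V2 E2 k)"
    and "card (pairs_with_undominated V1 E1 d) = card (pairs_with_undominated V2 E2 d)"
    and "card (arcs V1 E1) = card (arcs V2 E2)"
proof -
  obtain f where f: "bij_betw f V1 V2" and e: "\<forall>x\<in>V1. \<forall>y\<in>V1. E1 x y \<longleftrightarrow> E2 (f x) (f y)"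
    using assms by (auto simp: graph_iso_def)
  have card_image_f: "S \<subseteq> V1 \<Longrightarrow> card (f ` S) = card S" for S
    using f by (meson bij_betw_def card_image inj_on_subset)
  have nonadj: "(f x, f y) \<in> nonadj_pairs V2 E2 \<longleftrightarrow> (x, y) \<in> nonadj_pairs V1 E1"
    if "x \<in> V1" "y \<in> V1" for x y
    using that e f by (auto simp: nonadj_pairs_def bij_betw_def inj_on_eq_iff)
  have type: "pair_type V2 E2 (f x, f y) = pair_type V1 E1 (x, y)"
    if "x \<in> V1" "y \<in> V1" for x y
    using nbr_sets_graph_iso(1,2)[OF f e that] nbr_sets_graph_iso(2)[OF f e that(2,1)]
    by (simp add: card_image_f common_nbrs_def private_nbrs_def)
  have undom: "card (undominated V2 E2 (f x, f y)) = card (undominated V1 E1 (x, y))"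
    if "x \<in> V1" "y \<in> V1" for x y
    using nbr_sets_graph_iso(3)[OF f e that] card_image_f by simp
  show "card (pairs_of_type V1 E1 k) = card (pairs_of_type V2 E2 k)"
    by (rule card_pairs_bij_betw[OF f])
      (use nonadj_pairs_subset in \<open>auto simp: pairs_of_type_def nonadj type simp del: pair_type.simps\<close>)
  show "card (pairs_with_undominated V1 E1 d) = card (pairs_with_undominated V2 E2 d)"
    by (rule card_pairs_bij_betw[OF f])
      (use nonadj_pairs_subset in
        \<open>auto simp: pairs_with_undominated_def nonadj undom simp del: undominated.simps\<close>)
  show "card (arcs V1 E1) = card (arcs V2 E2)"
    by (rule card_pairs_bij_betw[OF f]) (use e f in \<open>auto simp: arcs_def bij_betw_def\<close>)
qed

lemma same_deck_card: "same_deck V E W F \<Longrightarrow> card W = card V"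
  by (auto simp: same_deck_def bij_betw_same_card)

lemma same_deck_sum_eq:
  assumes "same_deck V E W F"
    and "\<And>V' E' W' F'. graph_iso V' E' W' F' \<Longrightarrow> \<phi> V' E' = \<psi> W' F'"
  shows "(\<Sum>v\<in>V. \<phi> (V - {v}) (card_edges E v)) = (\<Sum>w\<in>W. \<psi> (W - {w}) (card_edges F w))"
proof -
  obtain g where g: "bij_betw g V W"
    and iso: "\<And>v. v \<in> V \<Longrightarrow> graph_iso (V - {v}) (card_edges E v) (W - {g v}) (card_edges F (g v))"
    using assms(1) by (auto simp: same_deck_def card_verts_def)
  have "(\<Sum>v\<in>V. \<phi> (V - {v}) (card_edges E v)) = (\<Sum>v\<in>V. \<psi> (W - {g v}) (card_edges F (g v)))"
    using iso assms(2) by (auto intro: sum.cong)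
  also have "\<dots> = (\<Sum>w\<in>W. \<psi> (W - {w}) (card_edges F w))"
    using g by (rule sum.reindex_bij_betw)
  finally show ?thesis .
qed

lemma same_deck_sums:
  assumes "same_deck V E W F"
  shows "(\<Sum>v\<in>V. card (pairs_of_type (V - {v}) (card_edges E v) k)) =
           (\<Sum>w\<in>W. card (pairs_of_type (W - {w}) (card_edges F w) k))"
    and "(\<Sum>v\<in>V. card (pairs_with_undominated (V - {v}) (card_edges E v) d)) =
           (\<Sum>w\<in>W. card (pairs_with_undominated (W - {w}) (card_edges F w) d))"
    and "(\<Sum>v\<in>V. card (arcs (V - {v}) (card_edges E v))) =
           (\<Sum>w\<in>W. card (arcs (W - {w}) (card_edges F w)))"
proof -
  show "(\<Sum>v\<in>V. card (pairs_of_type (V - {v}) (card_edges E v) k)) =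
          (\<Sum>w\<in>W. card (pairs_of_type (W - {w}) (card_edges F w) k))"
    using assms by (rule same_deck_sum_eq[where \<phi> = "\<lambda>V E. card (pairs_of_type V E k)"
        and \<psi> = "\<lambda>V E. card (pairs_of_type V E k)"]) (rule graph_iso_card_pairs(1))
  show "(\<Sum>v\<in>V. card (pairs_with_undominated (V - {v}) (card_edges E v) d)) =
          (\<Sum>w\<in>W. card (pairs_with_undominated (W - {w}) (card_edges F w) d))"
    using assms by (rule same_deck_sum_eq[where \<phi> = "\<lambda>V E. card (pairs_with_undominated V E d)"
        and \<psi> = "\<lambda>V E. card (pairs_with_undominated V E d)"]) (rule graph_iso_card_pairs(2))
  show "(\<Sum>v\<in>V. card (arcs (V - {v}) (card_edges E v))) =
          (\<Sum>w\<in>W. card (arcs (W - {w}) (card_edges F w)))"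
    using assms by (rule same_deck_sum_eq[where \<phi> = "\<lambda>V E. card (arcs V E)"
        and \<psi> = "\<lambda>V E. card (arcs V E)"]) (rule graph_iso_card_pairs(3))
qed

lemma same_deck_card_arcs:
  assumes G: "graph V E" and H: "graph W F" and deck: "same_deck V E W F" and n: "card V \<ge> 3"
  shows "card (arcs W F) = card (arcs V E)"
proof -
  have "(card V - 2) * card (arcs V E) = (card V - 2) * card (arcs W F)"
    using same_deck_sums(3)[OF deck] sum_card_arcs_delete[OF G] sum_card_arcs_delete[OF H]
      same_deck_card[OF deck] by simp
  then show ?thesis
    using n by simp
qed

lemma hypomorphism_degree:
  assumes G: "graph V E" and H: "graph W F" and g: "hypomorphism V E W F g"
    and n: "card V \<ge> 3" and v: "v \<in> V"
  shows "degree W F (g v) = degree V E v"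
proof -
  have "g v \<in> W" and iso: "graph_iso (V - {v}) (card_edges E v) (W - {g v}) (card_edges F (g v))"
    using g v by (auto simp: hypomorphism_def bij_betw_def)
  moreover have "card (arcs W F) = card (arcs V E)"
    using g by (intro same_deck_card_arcs[OF G H _ n]) (auto simp: same_deck_iff_hypomorphism)
  ultimately show ?thesis
    using card_arcs_delete[OF G v] card_arcs_delete[OF H] graph_iso_card_pairs(3)[OF iso] by simp
qed

lemma hypomorphism_no_isolated:
  assumes G: "graph V E" and H: "graph W F" and g: "hypomorphism V E W F g"
    and n: "card V \<ge> 3" and no_isolated: "\<forall>x\<in>V. \<exists>y. E x y"
  shows "\<forall>w\<in>W. \<exists>z. F w z"
proof
  fix w assume "w \<in> W"
  then obtain v where v: "v \<in> V" "w = g v"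
    using g by (auto simp: hypomorphism_def bij_betw_def)
  obtain y where "E v y"
    using no_isolated v by blast
  then have "y \<in> {y \<in> V. E v y}"
    using graphD(3)[OF G] by blast
  then have "degree V E v \<noteq> 0"
    using graphD(1)[OF G] by (auto simp: degree_def)
  then have "degree W F w \<noteq> 0"
    using hypomorphism_degree[OF G H g n v(1)] v(2) by simp
  then have "{z \<in> W. F w z} \<noteq> {}"
    unfolding degree_def by (metis card.empty)
  then show "\<exists>z. F w z"
    by blast
qed

lemma graph_iso_extend_universal:
  assumes G: "graph V E" and H: "graph W F" and u: "u \<in> V" and w: "w \<in> W"
    and iso: "graph_iso (V - {u}) (card_edges E u) (W - {w}) (card_edges F w)"
    and "\<forall>y\<in>V - {u}. E u y" and "\<forall>z\<in>W - {w}. F w z"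
  shows "graph_iso V E W F"
proof -
  obtain f where f: "bij_betw f (V - {u}) (W - {w})"
    and e: "\<forall>x\<in>V - {u}. \<forall>y\<in>V - {u}. card_edges E u x y \<longleftrightarrow> card_edges F w (f x) (f y)"
    using iso by (auto simp: graph_iso_def)
  define f' where "f' = f(u := w)"
  have "bij_betw f' ((V - {u}) \<union> {u}) ((W - {w}) \<union> {w})"
  proof (rule bij_betw_combine)
    show "bij_betw f' (V - {u}) (W - {w})"
      using f by (rule bij_betw_cong[THEN iffD1, rotated]) (auto simp: f'_def)
  qed (auto simp: f'_def)
  moreover have "(V - {u}) \<union> {u} = V" "(W - {w}) \<union> {w} = W"
    using u w by auto
  moreover have fW: "f x \<in> W - {w}" if "x \<in> V - {u}" for x
    using f that by (auto simp: bij_betw_def)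
  have "E x y \<longleftrightarrow> F (f' x) (f' y)" if "x \<in> V" "y \<in> V" for x y
    using that e fW[of x] fW[of y] assms(6,7) graphD(4,5)[OF G] graphD(4,5)[OF H]
    by (cases "x = u"; cases "y = u") (auto simp: f'_def card_edges_def)
  ultimately show ?thesis
    by (auto simp: graph_iso_def)
qed

lemma hypomorphism_universal_vertex_graph_iso:
  assumes G: "graph V E" and H: "graph W F" and g: "hypomorphism V E W F g"
    and n: "card V \<ge> 3" and u: "u \<in> V" and universal: "\<forall>y\<in>V - {u}. E u y"
  shows "graph_iso V E W F"
proof (rule graph_iso_extend_universal[OF G H u])
  show gu: "g u \<in> W" and "graph_iso (V - {u}) (card_edges E u) (W - {g u}) (card_edges F (g u))"
    using g u by (auto simp: hypomorphism_def bij_betw_def)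
  have "{y \<in> V. E u y} = V - {u}"
    using universal graphD(3,5)[OF G] by blast
  moreover have "card W = card V"
    using g by (metis bij_betw_same_card hypomorphism_def)
  ultimately have "degree W F (g u) = card (W - {g u})"
    using hypomorphism_degree[OF G H g n u] u gu graphD(1)[OF G] by (simp add: degree_def)
  moreover have "{z \<in> W. F (g u) z} \<subseteq> W - {g u}"
    using graphD(5)[OF H] by auto
  ultimately have "{z \<in> W. F (g u) z} = W - {g u}"
    using graphD(1)[OF H] by (intro card_subset_eq) (auto simp: degree_def)
  then show "\<forall>z\<in>W - {g u}. F (g u) z"
    by auto
qed (fact universal)

section \<open>Domination and isolated vertices\<close>

lemma connected_no_isolated:
  assumes "connected_graph V E" and "card V \<ge> 2"
  shows "\<forall>x\<in>V. \<exists>y. E x y"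
proof
  fix x assume "x \<in> V"
  have "V \<noteq> {x}"
    using assms(2) by auto
  then obtain y where "y \<in> V" "y \<noteq> x"
    using \<open>x \<in> V\<close> by blast
  then have "E\<^sup>*\<^sup>* x y" and "x \<noteq> y"
    using assms(1) \<open>x \<in> V\<close> by (auto simp: connected_graph_def)
  then show "\<exists>y. E x y"
    by (cases rule: converse_rtranclpE) blast+
qed

lemma dominating_self: "dominating V E V"
  by (simp add: dominating_def)

lemma finite_dominating_cards: "finite V \<Longrightarrow> finite {card S | S. dominating V E S}"
  by (rule finite_subset[of _ "card ` Pow V"]) (auto simp: dominating_def)

lemma domination_number_le:
  assumes "finite V" and "dominating V E S"
  shows "domination_number V E \<le> card S"
  unfolding domination_number_def
  using finite_dominating_cards[OF assms(1)] by (rule Min_le) (use assms(2) in blast)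

lemma domination_number_attained:
  assumes "finite V"
  shows "\<exists>S. dominating V E S \<and> card S = domination_number V E"
proof -
  have "domination_number V E \<in> {card S | S. dominating V E S}"
    unfolding domination_number_def
    by (intro Min_in finite_dominating_cards[OF assms]) (use dominating_self in blast)
  then show ?thesis
    by auto
qed

lemma dominating_pair_imp_universal_vertex:
  assumes G: "graph V E" and "V \<noteq> {}" and "domination_number V E \<noteq> 2"
    and "dominating V E {x, y}"
  shows "\<exists>u\<in>V. \<forall>z\<in>V - {u}. E u z"
proof -
  obtain S where S: "dominating V E S" "card S = domination_number V E"
    using domination_number_attained graphD(1)[OF G] by blast
  have "card {x, y} \<le> 2"
    by (cases "x = y") auto
  then have "card S \<le> 2"
    using domination_number_le[OF graphD(1)[OF G] assms(4)] S(2) by simp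
  moreover have "S \<noteq> {}"
    using S(1) \<open>V \<noteq> {}\<close> by (auto simp: dominating_def)
  moreover have "finite S"
    using S(1) graphD(1)[OF G] by (auto simp: dominating_def intro: finite_subset)
  ultimately have "card S = 1"
    using assms(3) S(2) card_gt_0_iff[of S] by arith
  then obtain u where "S = {u}"
    by (rule card_1_singletonE)
  then show ?thesis
    using S(1) graphD(4)[OF G] by (auto simp: dominating_def)
qed

lemma pairs_with_no_undominated_empty:
  assumes G: "graph V E" and "V \<noteq> {}" and "domination_number V E \<noteq> 2"
    and "\<not> (\<exists>u\<in>V. \<forall>z\<in>V - {u}. E u z)"
  shows "pairs_with_undominated V E 0 = {}"
proof (rule ccontr)
  assume "pairs_with_undominated V E 0 \<noteq> {}"
  then obtain x y where "(x, y) \<in> nonadj_pairs V E" "undominated V E (x, y) = {}"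
    using graphD(1)[OF G] by (auto simp: pairs_with_undominated_def)
  then have "dominating V E {x, y}"
    by (auto simp: dominating_def nonadj_pairs_def)
  then show False
    using dominating_pair_imp_universal_vertex[OF assms(1-3)] assms(4) by blast
qed

lemma pairs_with_all_undominated_empty:
  assumes G: "graph V E" and no_isolated: "\<forall>x\<in>V. \<exists>y. E x y"
  shows "pairs_with_undominated V E (card V - 2) = {}"
proof (rule ccontr)
  assume "pairs_with_undominated V E (card V - 2) \<noteq> {}"
  then obtain x y where xy: "(x, y) \<in> nonadj_pairs V E" "card (undominated V E (x, y)) = card V - 2"
    by (auto simp: pairs_with_undominated_def)
  then have "card (common_nbrs V E x y) = 0" "card (private_nbrs V E x y) = 0"
    using card_nonadj_pair_partition[OF G xy(1)] by simp_all
  then have "common_nbrs V E x y = {}" "private_nbrs V E x y = {}"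
    using graphD(1)[OF G] by (auto simp: common_nbrs_def private_nbrs_def)
  moreover obtain z where "E x z"
    using no_isolated xy(1) by (auto simp: nonadj_pairs_def)
  then have "z \<in> V" "E z x"
    using graphD(3,4)[OF G] by blast+
  ultimately show False
    by (auto simp: common_nbrs_def private_nbrs_def)
qed

lemma full_pairs_of_type_subset:
  assumes G: "graph V E" and "k1 + k2 + k3 = card V - 2"
  shows "pairs_of_type V E (k1, k2, k3) \<subseteq> pairs_with_undominated V E 0"
proof
  fix p assume p: "p \<in> pairs_of_type V E (k1, k2, k3)"
  then obtain x y where xy: "p = (x, y)" "(x, y) \<in> nonadj_pairs V E"
    by (cases p) (auto simp: pairs_of_type_def)
  then show "p \<in> pairs_with_undominated V E 0"
    using card_nonadj_pair_partition[OF G xy(2)] p assms(2)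
    by (auto simp: pairs_of_type_def pairs_with_undominated_def)
qed

section \<open>Reconstruction of the pair counts\<close>

lemma same_deck_card_pairs_with_undominated_from_top:
  assumes G: "graph V E" and H: "graph W F" and deck: "same_deck V E W F"
    and top: "card (pairs_with_undominated W F (card V - 2)) =
                card (pairs_with_undominated V E (card V - 2))"
    and "d \<le> card V - 2"
  shows "card (pairs_with_undominated W F d) = card (pairs_with_undominated V E d)"
  using assms(5)
proof (induction "card V - 2 - d" arbitrary: d rule: less_induct)
  case less
  show ?case
  proof (cases "d = card V - 2")
    case True
    then show ?thesis
      using top by simp
  next
    case False
    then have "card (pairs_with_undominated W F (Suc d)) = card (pairs_with_undominated V E (Suc d))"
      using less.hyps[of "Suc d"] less.prems by simp
    moreover have
      "(card V - 2 - d) * card (pairs_with_undominated W F d) + Suc d * card (pairs_with_undominated W F (Suc d))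
     = (card V - 2 - d) * card (pairs_with_undominated V E d) + Suc d * card (pairs_with_undominated V E (Suc d))"
      using same_deck_sums(2)[OF deck] sum_card_pairs_with_undominated_delete[OF G]
        sum_card_pairs_with_undominated_delete[OF H] same_deck_card[OF deck] by simp
    ultimately have "(card V - 2 - d) * card (pairs_with_undominated W F d)
                   = (card V - 2 - d) * card (pairs_with_undominated V E d)"
      by simp
    moreover have "card V - 2 - d \<noteq> 0"
      using False less.prems by simp
    ultimately show ?thesis
      by simp
  qed
qed

lemma same_deck_card_pairs_of_type_from_top:
  assumes G: "graph V E" and H: "graph W F" and deck: "same_deck V E W F"
    and top: "\<And>k1 k2 k3. k1 + k2 + k3 = card V - 2 \<Longrightarrow>
                card (pairs_of_type W F (k1, k2, k3)) = card (pairs_of_type V E (k1, k2, k3))"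
    and "k1 + k2 + k3 \<le> card V - 2"
  shows "card (pairs_of_type W F (k1, k2, k3)) = card (pairs_of_type V E (k1, k2, k3))"
  using assms(5)
proof (induction "card V - 2 - (k1 + k2 + k3)" arbitrary: k1 k2 k3 rule: less_induct)
  case less
  show ?case
  proof (cases "k1 + k2 + k3 = card V - 2")
    case True
    then show ?thesis
      using top by simp
  next
    case False
    then have "card (pairs_of_type W F (Suc k1, k2, k3)) = card (pairs_of_type V E (Suc k1, k2, k3))"
      and "card (pairs_of_type W F (k1, Suc k2, k3)) = card (pairs_of_type V E (k1, Suc k2, k3))"
      and "card (pairs_of_type W F (k1, k2, Suc k3)) = card (pairs_of_type V E (k1, k2, Suc k3))"
      using less.hyps[of "Suc k1" k2 k3] less.hyps[of k1 "Suc k2" k3] less.hyps[of k1 k2 "Suc k3"]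
        less.prems by simp_all
    moreover have
      "(card V - 2 - (k1 + k2 + k3)) * card (pairs_of_type W F (k1, k2, k3))
         + Suc k1 * card (pairs_of_type W F (Suc k1, k2, k3))
         + Suc k2 * card (pairs_of_type W F (k1, Suc k2, k3))
         + Suc k3 * card (pairs_of_type W F (k1, k2, Suc k3))
     = (card V - 2 - (k1 + k2 + k3)) * card (pairs_of_type V E (k1, k2, k3))
         + Suc k1 * card (pairs_of_type V E (Suc k1, k2, k3))
         + Suc k2 * card (pairs_of_type V E (k1, Suc k2, k3))
         + Suc k3 * card (pairs_of_type V E (k1, k2, Suc k3))"
      using same_deck_sums(1)[OF deck] sum_card_pairs_of_type_delete[OF G]
        sum_card_pairs_of_type_delete[OF H] same_deck_card[OF deck] by simp
    ultimately have "(card V - 2 - (k1 + k2 + k3)) * card (pairs_of_type W F (k1, k2, k3))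
                   = (card V - 2 - (k1 + k2 + k3)) * card (pairs_of_type V E (k1, k2, k3))"
      by simp
    moreover have "card V - 2 - (k1 + k2 + k3) \<noteq> 0"
      using False less.prems by simp
    ultimately show ?thesis
      by simp
  qed
qed

lemma same_deck_card_pairs_of_type:
  assumes G: "graph V E" and "connected_graph V E" and n: "card V \<ge> 3"
    and "domination_number V E \<noteq> 2"
    and H: "graph W F" and deck: "same_deck V E W F"
    and "k1 + k2 + k3 \<le> card V - 2"
  shows "card (pairs_of_type W F (k1, k2, k3)) = card (pairs_of_type V E (k1, k2, k3))"
proof -
  obtain g where g: "hypomorphism V E W F g"
    using deck by (auto simp: same_deck_iff_hypomorphism)
  show ?thesis
  proof (cases "\<exists>u\<in>V. \<forall>z\<in>V - {u}. E u z")
    case True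
    then have "graph_iso V E W F"
      using hypomorphism_universal_vertex_graph_iso[OF G H g n] by blast
    then show ?thesis
      by (simp add: graph_iso_card_pairs(1))
  next
    case False
    have "V \<noteq> {}"
      using n by auto
    then have V0: "pairs_with_undominated V E 0 = {}"
      by (rule pairs_with_no_undominated_empty[OF G _ assms(4) False])
    have no_isolated: "\<forall>x\<in>V. \<exists>y. E x y"
      using n by (intro connected_no_isolated[OF assms(2)]) simp
    then have "card (pairs_with_undominated W F (card V - 2)) =
                 card (pairs_with_undominated V E (card V - 2))"
      using pairs_with_all_undominated_empty[OF G] pairs_with_all_undominated_empty[OF H]
        hypomorphism_no_isolated[OF G H g n] same_deck_card[OF deck] by simp
    then have "card (pairs_with_undominated W F 0) = card (pairs_with_undominated V E 0)"
      by (rule same_deck_card_pairs_with_undominated_from_top[OF G H deck]) simp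
    with V0 have W0: "pairs_with_undominated W F 0 = {}"
      using finite_pairs_with_undominated[OF graphD(1)[OF H]] by simp
    have "card (pairs_of_type W F (j1, j2, j3)) = card (pairs_of_type V E (j1, j2, j3))"
      if "j1 + j2 + j3 = card V - 2" for j1 j2 j3
    proof -
      have "pairs_of_type V E (j1, j2, j3) = {}"
        using full_pairs_of_type_subset[OF G that] V0 by blast
      moreover have "pairs_of_type W F (j1, j2, j3) = {}"
        using full_pairs_of_type_subset[OF H] that same_deck_card[OF deck] W0 by auto
      ultimately show ?thesis
        by simp
    qed
    then show ?thesis
      by (rule same_deck_card_pairs_of_type_from_top[OF G H deck _ assms(7)])
  qed
qed

section \<open>Unordered pairs\<close>

lemma dv_eq_card_doubletons:
  "dv V E k1 k2 k3 = card ((\<lambda>(x, y). {x, y}) ` pairs_of_type V E (k1, k2, k3))"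
proof -
  have "(x, y) \<in> pairs_of_type V E (k1, k2, k3) \<longleftrightarrow> x \<in> V \<and> y \<in> V \<and> x \<noteq> y \<and> \<not> E x y
          \<and> card {z \<in> V. E z x \<and> E z y} = k1 \<and> card {z \<in> V. E z x \<and> \<not> E z y} = k2
          \<and> card {z \<in> V. E z y \<and> \<not> E z x} = k3" for x y
    by (auto simp: pairs_of_type_def nonadj_pairs_def common_nbrs_def private_nbrs_def)
  then have "dv V E k1 k2 k3 = card {{x, y} | x y. (x, y) \<in> pairs_of_type V E (k1, k2, k3)}"
    by (simp add: dv_def)
  also have "{{x, y} | x y. (x, y) \<in> pairs_of_type V E (k1, k2, k3)} =
               (\<lambda>(x, y). {x, y}) ` pairs_of_type V E (k1, k2, k3)"
    by auto
  finally show ?thesis .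
qed

lemma card_eq_twice_card_doubletons:
  assumes fin: "finite S" and sym: "\<And>x y. (x, y) \<in> S \<Longrightarrow> (y, x) \<in> S"
    and irrefl: "\<And>x y. (x, y) \<in> S \<Longrightarrow> x \<noteq> y"
  shows "card S = 2 * card ((\<lambda>(x, y). {x, y}) ` S)"
proof -
  define doubleton :: "'a \<times> 'a \<Rightarrow> 'a set" where "doubleton = (\<lambda>(x, y). {x, y})"
  have "card S = (\<Sum>q\<in>doubleton ` S. card {p \<in> S. doubleton p = q})"
    using sum.image_gen[OF fin, of "\<lambda>_. 1 :: nat" doubleton] by simp
  also have "\<dots> = (\<Sum>q\<in>doubleton ` S. 2)"
  proof (rule sum.cong)
    fix q assume "q \<in> doubleton ` S"
    then obtain x y where xy: "(x, y) \<in> S" "q = {x, y}"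
      by (auto simp: doubleton_def)
    then have "{p \<in> S. doubleton p = q} = {(x, y), (y, x)}"
      using sym by (auto simp: doubleton_def doubleton_eq_iff)
    then show "card {p \<in> S. doubleton p = q} = 2"
      using irrefl[OF xy(1)] by simp
  qed simp
  finally show ?thesis
    by (simp add: doubleton_def)
qed

lemma swap_mem_pairs_of_type:
  assumes "graph V E"
  shows "(y, x) \<in> pairs_of_type V E (k1, k2, k3) \<longleftrightarrow> (x, y) \<in> pairs_of_type V E (k1, k3, k2)"
proof -
  have "common_nbrs V E y x = common_nbrs V E x y"
    by (auto simp: common_nbrs_def)
  then show ?thesis
    using graphD(4)[OF assms] by (auto simp: pairs_of_type_def nonadj_pairs_def)
qed

lemma twice_dv:
  assumes G: "graph V E"
  shows "2 * dv V E k1 k2 k3 = card (pairs_of_type V E (k1, k2, k3))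
           + (if k2 = k3 then 0 else card (pairs_of_type V E (k1, k3, k2)))"
proof -
  define S where "S = pairs_of_type V E (k1, k2, k3) \<union> pairs_of_type V E (k1, k3, k2)"
  have "(\<lambda>(x, y). {x, y}) ` S \<subseteq> (\<lambda>(x, y). {x, y}) ` pairs_of_type V E (k1, k2, k3)"
  proof (rule image_subsetI)
    fix p assume "p \<in> S"
    obtain x y where p: "p = (x, y)"
      by (cases p)
    show "(\<lambda>(x, y). {x, y}) p \<in> (\<lambda>(x, y). {x, y}) ` pairs_of_type V E (k1, k2, k3)"
    proof (cases "(x, y) \<in> pairs_of_type V E (k1, k2, k3)")
      case True
      then show ?thesis
        by (auto simp: p)
    next
      case False
      then have "(y, x) \<in> pairs_of_type V E (k1, k2, k3)"
        using \<open>p \<in> S\<close> swap_mem_pairs_of_type[OF G, of y x k1 k2 k3] by (simp add: S_def p)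
      then show ?thesis
        by (auto simp: p insert_commute intro: rev_image_eqI)
    qed
  qed
  then have "(\<lambda>(x, y). {x, y}) ` S = (\<lambda>(x, y). {x, y}) ` pairs_of_type V E (k1, k2, k3)"
    by (auto simp: S_def)
  moreover have fin: "finite (pairs_of_type V E k)" for k
    using finite_nonadj_pairs[OF graphD(1)[OF G]] by (simp add: pairs_of_type_def)
  have "card S = 2 * card ((\<lambda>(x, y). {x, y}) ` S)"
  proof (rule card_eq_twice_card_doubletons)
    show "finite S"
      using fin by (simp add: S_def)
    show "(y, x) \<in> S" if "(x, y) \<in> S" for x y
      using that swap_mem_pairs_of_type[OF G, of y x k1 k2 k3]
        swap_mem_pairs_of_type[OF G, of y x k1 k3 k2]
      unfolding S_def by blast
    show "x \<noteq> y" if "(x, y) \<in> S" for x y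
      using that by (auto simp: S_def pairs_of_type_def nonadj_pairs_def)
  qed
  moreover have "card S = card (pairs_of_type V E (k1, k2, k3))
                   + (if k2 = k3 then 0 else card (pairs_of_type V E (k1, k3, k2)))"
  proof (cases "k2 = k3")
    case False
    then have "pairs_of_type V E (k1, k2, k3) \<inter> pairs_of_type V E (k1, k3, k2) = {}"
      by (auto simp: pairs_of_type_def)
    with False show ?thesis
      using fin by (simp add: S_def card_Un_disjoint)
  qed (simp add: S_def)
  ultimately show ?thesis
    by (simp add: dv_eq_card_doubletons)
qed

lemma same_deck_dv:
  assumes G: "graph V E" and "connected_graph V E" and "card V \<ge> 3"
    and "domination_number V E \<noteq> 2"
    and H: "graph W F" and "same_deck V E W F"
    and "k1 + k2 + k3 \<le> card V - 2"
  shows "dv W F k1 k2 k3 = dv V E k1 k2 k3"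
proof -
  have "card (pairs_of_type W F (k1, k2, k3)) = card (pairs_of_type V E (k1, k2, k3))"
    and "card (pairs_of_type W F (k1, k3, k2)) = card (pairs_of_type V E (k1, k3, k2))"
    using assms by (auto intro: same_deck_card_pairs_of_type)
  then have "2 * dv W F k1 k2 k3 = 2 * dv V E k1 k2 k3"
    using twice_dv[OF H, of k1 k2 k3] twice_dv[OF G, of k1 k2 k3] by simp
  then show ?thesis
    by simp
qed

theorem theorem15:
  fixes V :: "'a set" and E :: "'a \<Rightarrow> 'a \<Rightarrow> bool"
  assumes "graph V E" and "connected_graph V E"
    and "card V \<ge> 12"
    and "domination_number V E \<noteq> 2"
  shows "\<forall>(W :: 'b set) F. graph W F \<and> same_deck V E W F \<longrightarrow>
           (\<forall>k1 k2 k3. k1 + k2 + k3 \<le> card V - 3 \<longrightarrow> dv W F k1 k2 k3 = dv V E k1 k2 k3)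
         \<and> (\<forall>k1 k. k1 + 2 * k \<le> card V - 3 \<longrightarrow> dv W F k1 k k = dv V E k1 k k)"
proof (intro allI impI)
  fix W :: "'b set" and F
  assume "graph W F \<and> same_deck V E W F"
  then have dv: "dv W F k1 k2 k3 = dv V E k1 k2 k3" if "k1 + k2 + k3 \<le> card V - 2" for k1 k2 k3
    using same_deck_dv[OF assms(1,2) _ assms(4) _ _ that] assms(3) by auto
  show "(\<forall>k1 k2 k3. k1 + k2 + k3 \<le> card V - 3 \<longrightarrow> dv W F k1 k2 k3 = dv V E k1 k2 k3)
      \<and> (\<forall>k1 k. k1 + 2 * k \<le> card V - 3 \<longrightarrow> dv W F k1 k k = dv V E k1 k k)"
    by (intro conjI allI impI dv; linarith)
qed

end
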